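(* Let $\mathbf G$ be a finite unitary group acting on a finite-dimensional complex inner product space $V$, $\mathbf x_0\in V$ a unit vector with $\mathbf G\mathbf x_0\neq\{\mathbf x_0\}$, and $X$ a generating set of $\mathbf G$ such that condition $(\ddagger)$ holds. Let $\delta$ be as defined in the context and let $S=\operatorname{Stab}_{\mathbf G}(\mathbf x_0)$. If $g\in\mathbf G$ and $\mathbf r\in V$ satisfy $\|\mathbf r-g^{-1}\mathbf x_0\|<\delta/3$, then either version (A) or (B) of the primitive decoding algorithm applied to $\mathbf r$ terminates in at most $\lfloor 6/\delta\rfloor$ steps and outputs $c_k\cdots c_1\in Sg$.
   Context: Condition $(\ddagger)$: for every $\mathbf w\in\mathbf G\mathbf x_0$ with $\mathbf w\neq\mathbf x_0$ there is $c\in X$ with $\|c\mathbf w-\mathbf x_0\|<\|\mathbf w-\mathbf x_0\|$. For a codeword $\mathbf w\in\mathbf G\mathbf x_0$, $\operatorname{MG}(\mathbf w)=\{c\in X\cup\{I\}:\|c\mathbf w-\mathbf x_0\|\le\|d\mathbf w-\mathbf x_0\|\text{ for all }d\in X\cup\{I\}\}$, and $\delta=\min\{\|\mathbf w-\mathbf x_0\|-\|c\mathbf w-\mathbf x_0\|:\mathbf w\in\mathbf G\mathbf x_0\setminus\{\mathbf x_0\},\ c\in\operatorname{MG}(\mathbf w)\}$. Primitive decoding algorithm: set $\mathbf r_0=\mathbf r$; given $\mathbf r_k$, if there is no $c\in X$ with $\|c\mathbf r_k-\mathbf x_0\|<\|\mathbf r_k-\mathbf x_0\|-\delta/3$, terminate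 and output $c_k\cdots c_1$; otherwise choose $c_{k+1}$ and set $\mathbf r_{k+1}=c_{k+1}\mathbf r_k$, where in version (A) $c_{k+1}\in X$ minimizes $\|c_{k+1}\mathbf r_k-\mathbf x_0\|$, and in version (B) $c_{k+1}$ is the first element of $X$ (in a fixed ordering) with $\|c_{k+1}\mathbf r_k-\mathbf x_0\|<\|\mathbf r_k-\mathbf x_0\|-\delta/3$. *)

theory Defs
  imports "HOL-Analysis.Analysis"
begin

text \<open>V is modelled as the standard complex inner product space complex^'n
  (norm = Euclidean/Hermitian norm); group elements are n x n complex matrices.\<close>

type_synonym 'n cmat = "complex ^'n ^'n"

definition conj_transpose :: "'n::finite cmat \<Rightarrow> 'n cmat" where
  "conj_transpose A = (\<chi> i j. cnj (A $ j $ i))"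

definition unitary_mat :: "'n::finite cmat \<Rightarrow> bool" where
  "unitary_mat A \<longleftrightarrow> conj_transpose A ** A = mat 1"

definition finite_unitary_group :: "'n::finite cmat set \<Rightarrow> bool" where
  "finite_unitary_group G \<longleftrightarrow> finite G \<and> mat 1 \<in> G
     \<and> (\<forall>a\<in>G. \<forall>b\<in>G. a ** b \<in> G)
     \<and> (\<forall>a\<in>G. matrix_inv a \<in> G \<and> a ** matrix_inv a = mat 1 \<and> matrix_inv a ** a = mat 1)
     \<and> (\<forall>a\<in>G. unitary_mat a)"

inductive_set generated :: "'n::finite cmat set \<Rightarrow> 'n cmat set" for X where
  gen_one: "mat 1 \<in> generated X"
| gen_mult: "x \<in> X \<Longrightarrow> a \<in> generated X \<Longrightarrow> x ** a \<in> generated X"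
| gen_inv: "x \<in> X \<Longrightarrow> a \<in> generated X \<Longrightarrow> matrix_inv x ** a \<in> generated X"

definition orbit :: "'n::finite cmat set \<Rightarrow> complex^'n \<Rightarrow> (complex^'n) set" where
  "orbit G x0 = (\<lambda>g. g *v x0) ` G"

definition stab :: "'n::finite cmat set \<Rightarrow> complex^'n \<Rightarrow> 'n cmat set" where
  "stab G x0 = {s \<in> G. s *v x0 = x0}"

definition cond_ddagger :: "'n::finite cmat set \<Rightarrow> 'n cmat set \<Rightarrow> complex^'n \<Rightarrow> bool" where
  "cond_ddagger G X x0 \<longleftrightarrow>
     (\<forall>w \<in> orbit G x0. w \<noteq> x0 \<longrightarrow> (\<exists>c\<in>X. norm (c *v w - x0) < norm (w - x0)))"

definition MG :: "'n::finite cmat set \<Rightarrow> complex^'n \<Rightarrow> complex^'n \<Rightarrow> 'n cmat set" where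
  "MG X x0 w = {c \<in> X \<union> {mat 1}. \<forall>d \<in> X \<union> {mat 1}. norm (c *v w - x0) \<le> norm (d *v w - x0)}"

definition delta :: "'n::finite cmat set \<Rightarrow> 'n cmat set \<Rightarrow> complex^'n \<Rightarrow> real" where
  "delta G X x0 = Min {norm (w - x0) - norm (c *v w - x0) | w c.
       w \<in> orbit G x0 - {x0} \<and> c \<in> MG X x0 w}"

definition improves :: "'n::finite cmat \<Rightarrow> complex^'n \<Rightarrow> real \<Rightarrow> complex^'n \<Rightarrow> bool" where
  "improves c x0 d r \<longleftrightarrow> norm (c *v r - x0) < norm (r - x0) - d / 3"

definition can_continue :: "'n::finite cmat set \<Rightarrow> complex^'n \<Rightarrow> real \<Rightarrow> complex^'n \<Rightarrow> bool" where
  "can_continue X x0 d r \<longleftrightarrow> (\<exists>c\<in>X. improves c x0 d r)"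

text \<open>Version (A): a list [c1,...,ck] of choices is a valid (partial) run from r.
  Any minimizer may be chosen (arbitrary tie-breaking).\<close>
fun run_A :: "'n::finite cmat set \<Rightarrow> complex^'n \<Rightarrow> real \<Rightarrow> complex^'n \<Rightarrow> 'n cmat list \<Rightarrow> bool" where
  "run_A X x0 d r [] = True"
| "run_A X x0 d r (c # cs) =
     (can_continue X x0 d r \<and> c \<in> X
      \<and> (\<forall>c'\<in>X. norm (c *v r - x0) \<le> norm (c' *v r - x0))
      \<and> run_A X x0 d (c *v r) cs)"

fun run_B :: "'n::finite cmat list \<Rightarrow> complex^'n \<Rightarrow> real \<Rightarrow> complex^'n \<Rightarrow> 'n cmat list \<Rightarrow> bool" where
  "run_B xs x0 d r [] = True"
| "run_B xs x0 d r (c # cs) =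
     (can_continue (set xs) x0 d r
      \<and> c = hd (filter (\<lambda>c'. improves c' x0 d r) xs)
      \<and> run_B xs x0 d (c *v r) cs)"

definition apply_run :: "'n::finite cmat list \<Rightarrow> complex^'n \<Rightarrow> complex^'n" where
  "apply_run cs r = fold (\<lambda>c v. c *v v) cs r"

definition run_product :: "'n::finite cmat list \<Rightarrow> 'n cmat" where
  "run_product cs = fold (\<lambda>c acc. c ** acc) cs (mat 1)"

end

theory Submission imports Defs begin

text \<open>Every step of either decoder improves the distance to \<open>x0\<close> by more than \<open>\<delta>/3\<close>, and
  since the group acts isometrically the current vector stays within \<open>\<delta>/3\<close> of the orbit
  point \<open>c\<^sub>k\<cdots>c\<^sub>1 g\<^sup>-\<^sup>1 x0\<close>. If that orbit point differs from \<open>x0\<close>, the best generator for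
  it moves it at least \<open>\<delta>\<close> closer to \<open>x0\<close>, hence improves the current vector by more
  than \<open>\<delta>/3\<close>; so at termination the orbit point is \<open>x0\<close>, i.e. \<open>c\<^sub>k\<cdots>c\<^sub>1 \<in> S g\<close>. Likewise
  a vector that can still be improved is more than \<open>2\<delta>/3\<close> from \<open>x0\<close>, and since the
  starting distance is below \<open>2 + \<delta>/3\<close>, at most \<open>6/\<delta>\<close> steps are possible.\<close>

lemma norm_vec_square_complex:
  "complex_of_real ((norm (x::complex^'n::finite))\<^sup>2) = (\<Sum>i\<in>UNIV. x$i * cnj (x$i))"
proof -
  have "(norm x)\<^sup>2 = (\<Sum>i\<in>UNIV. (cmod (x$i))\<^sup>2)"
    unfolding norm_vec_def L2_set_def by (simp add: sum_nonneg)
  then show ?thesis by (simp only: of_real_sum complex_norm_square)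
qed

lemma unitary_mat_norm:
  fixes A :: "'n::finite cmat"
  assumes "unitary_mat A"
  shows "norm (A *v v) = norm v"
proof -
  have orthonormal: "(\<Sum>i\<in>UNIV. cnj (A$i$k) * A$i$j) = (if k = j then 1 else 0)" for k j
  proof -
    have "(conj_transpose A ** A)$k$j = mat 1 $k$j" using assms unfolding unitary_mat_def by simp
    then show ?thesis by (simp add: matrix_matrix_mult_def conj_transpose_def mat_def)
  qed
  have "(\<Sum>i\<in>UNIV. (A *v v)$i * cnj ((A *v v)$i))
      = (\<Sum>i\<in>UNIV. \<Sum>k\<in>UNIV. \<Sum>j\<in>UNIV. (v$j * cnj (v$k)) * (cnj (A$i$k) * A$i$j))"
    by (simp add: matrix_vector_mult_def sum_distrib_left sum_distrib_right cnj_sum mult_ac)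
  also have "\<dots> = (\<Sum>k\<in>UNIV. \<Sum>j\<in>UNIV. \<Sum>i\<in>UNIV. (v$j * cnj (v$k)) * (cnj (A$i$k) * A$i$j))"
    by (subst sum.swap) (rule sum.cong[OF refl], rule sum.swap)
  also have "\<dots> = (\<Sum>j\<in>UNIV. \<Sum>k\<in>UNIV. \<Sum>i\<in>UNIV. (v$j * cnj (v$k)) * (cnj (A$i$k) * A$i$j))"
    by (rule sum.swap)
  also have "\<dots> = (\<Sum>j\<in>UNIV. \<Sum>k\<in>UNIV. (v$j * cnj (v$k)) * (\<Sum>i\<in>UNIV. cnj (A$i$k) * A$i$j))"
    by (simp add: sum_distrib_left)
  also have "\<dots> = (\<Sum>j\<in>UNIV. v$j * cnj (v$j))"
    by (simp add: orthonormal if_distrib cong: if_cong)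
  finally have "complex_of_real ((norm (A *v v))\<^sup>2) = complex_of_real ((norm v)\<^sup>2)"
    by (simp only: norm_vec_square_complex)
  then have "(norm (A *v v))\<^sup>2 = (norm v)\<^sup>2" by (simp only: of_real_eq_iff)
  then show ?thesis by (simp add: power2_eq_iff_nonneg)
qed

lemma unitary_mat_dist:
  "unitary_mat A \<Longrightarrow> norm (A *v v - A *v w) = norm (v - w)"
  by (metis unitary_mat_norm matrix_vector_mult_diff_distrib)

fun improving_run :: "'n::finite cmat set \<Rightarrow> complex^'n \<Rightarrow> real \<Rightarrow> complex^'n \<Rightarrow> 'n cmat list \<Rightarrow> bool" where
  "improving_run X x0 d r [] = True"
| "improving_run X x0 d r (c # cs) = (c \<in> X \<and> improves c x0 d r \<and> improving_run X x0 d (c *v r) cs)"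

lemma apply_run_Nil [simp]: "apply_run [] r = r"
  by (simp add: apply_run_def)

lemma apply_run_Cons [simp]: "apply_run (c # cs) r = apply_run cs (c *v r)"
  by (simp add: apply_run_def)

lemma fold_mult_eq_run_product:
  fixes A :: "'n::finite cmat"
  shows "fold (\<lambda>c acc. c ** acc) cs A = run_product cs ** A"
proof (induction cs arbitrary: A)
  case Nil
  then show ?case by (simp add: run_product_def)
next
  case (Cons c cs)
  have "fold (\<lambda>c acc. c ** acc) (c # cs) A = run_product cs ** (c ** A)"
    by (simp add: Cons.IH)
  moreover have "run_product (c # cs) = run_product cs ** c"
    using Cons.IH[of c] by (simp add: run_product_def)
  ultimately show ?case by (simp add: matrix_mul_assoc)
qed

lemma run_product_Nil [simp]: "run_product [] = mat 1"
  by (simp add: run_product_def)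

lemma run_product_Cons: "run_product (c # cs) = run_product cs ** c"
  using fold_mult_eq_run_product[of cs c] by (simp add: run_product_def)

lemma apply_run_eq_run_product: "apply_run cs v = run_product cs *v v"
  by (induction cs arbitrary: v) (simp_all add: run_product_Cons matrix_vector_mul_assoc)

lemma run_A_snoc:
  "run_A X x0 d r (cs @ [c]) \<longleftrightarrow> run_A X x0 d r cs \<and> can_continue X x0 d (apply_run cs r) \<and> c \<in> X
      \<and> (\<forall>c'\<in>X. norm (c *v apply_run cs r - x0) \<le> norm (c' *v apply_run cs r - x0))"
  by (induction cs arbitrary: r) auto

lemma run_B_snoc:
  "run_B xs x0 d r (cs @ [c]) \<longleftrightarrow> run_B xs x0 d r cs \<and> can_continue (set xs) x0 d (apply_run cs r)
      \<and> c = hd (filter (\<lambda>c'. improves c' x0 d (apply_run cs r)) xs)"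
  by (induction cs arbitrary: r) auto

lemma improving_run_snoc:
  "improving_run X x0 d r (cs @ [c]) \<longleftrightarrow>
     improving_run X x0 d r cs \<and> c \<in> X \<and> improves c x0 d (apply_run cs r)"
  by (induction cs arbitrary: r) auto

lemma improving_run_set: "improving_run X x0 d r cs \<Longrightarrow> set cs \<subseteq> X"
  by (induction cs arbitrary: r) auto

lemma improving_run_dist:
  "improving_run X x0 d r cs \<Longrightarrow> norm (apply_run cs r - x0) + real (length cs) * d / 3 \<le> norm (r - x0)"
proof (induction cs arbitrary: r)
  case (Cons c cs)
  then have "improves c x0 d r"
    and "norm (apply_run cs (c *v r) - x0) + real (length cs) * d / 3 \<le> norm (c *v r - x0)"
    by auto
  moreover have "real (length (c # cs)) * d / 3 = d / 3 + real (length cs) * d / 3"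
    by (simp add: algebra_simps add_divide_distrib)
  ultimately show ?case unfolding improves_def apply_run_Cons by linarith
qed simp

text \<open>A minimising step of version (A) improves at least as much as any improving generator.\<close>
lemma run_A_improving: "run_A X x0 d r cs \<Longrightarrow> improving_run X x0 d r cs"
proof (induction cs arbitrary: r)
  case (Cons c cs)
  then obtain c' where "c' \<in> X" "improves c' x0 d r"
    by (auto simp: can_continue_def)
  with Cons show ?case
    by (fastforce simp: improves_def)
qed simp

lemma run_B_improving:
  assumes "set xs = X"
  shows "run_B xs x0 d r cs \<Longrightarrow> improving_run X x0 d r cs"
proof (induction cs arbitrary: r)
  case (Cons c cs)
  then have "filter (\<lambda>c'. improves c' x0 d r) xs \<noteq> []"
    by (auto simp: can_continue_def filter_empty_conv)
  then have "hd (filter (\<lambda>c'. improves c' x0 d r) xs) \<in> set (filter (\<lambda>c'. improves c' x0 d r) xs)"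
    by (rule hd_in_set)
  then have "c \<in> set (filter (\<lambda>c'. improves c' x0 d r) xs)"
    using Cons.prems by simp
  with Cons assms show ?case by auto
qed simp

lemma run_A_extend:
  assumes "finite X" "run_A X x0 d r cs" "can_continue X x0 d (apply_run cs r)"
  shows "\<exists>c. run_A X x0 d r (cs @ [c])"
proof -
  let ?f = "\<lambda>c. norm (c *v apply_run cs r - x0)"
  have "X \<noteq> {}" using assms(3) by (auto simp: can_continue_def)
  then have "arg_min_on ?f X \<in> X" "\<forall>c'\<in>X. ?f (arg_min_on ?f X) \<le> ?f c'"
    using arg_min_if_finite[OF assms(1), of ?f] by (auto simp: not_less)
  with assms(2,3) show ?thesis
    by (auto simp: run_A_snoc)
qed

lemma run_B_extend:
  "run_B xs x0 d r cs \<Longrightarrow> can_continue (set xs) x0 d (apply_run cs r) \<Longrightarrow> \<exists>c. run_B xs x0 d r (cs @ [c])"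
  by (auto simp: run_B_snoc)

lemma ex_unextendable_list:
  fixes P :: "'a list \<Rightarrow> bool"
  assumes "P []" and "\<And>cs. P cs \<Longrightarrow> length cs \<le> N"
    and "\<And>cs. P cs \<Longrightarrow> Q cs \<Longrightarrow> \<exists>c. P (cs @ [c])"
  shows "\<exists>cs. P cs \<and> \<not> Q cs"
proof -
  obtain cs where "P cs" and longest: "\<And>cs'. P cs' \<Longrightarrow> length cs' \<le> length cs"
    using ex_has_greatest_nat[of P "[]" length "Suc N"] assms(1,2) by (metis le_imp_less_Suc)
  moreover have "\<not> Q cs"
    using assms(3)[OF \<open>P cs\<close>] longest by fastforce
  ultimately show ?thesis by blast
qed

locale unitary_decoding =
  fixes G X :: "'n::finite cmat set" and x0 :: "complex^'n"
  assumes unitary_group: "finite_unitary_group G"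
    and norm_x0: "norm x0 = 1"
    and orbit_nontrivial: "orbit G x0 \<noteq> {x0}"
    and generators_subset: "X \<subseteq> G"
    and ddagger: "cond_ddagger G X x0"
begin

abbreviation \<delta> :: real where "\<delta> \<equiv> delta G X x0"

lemma finite_G: "finite G"
  and one_in_G: "mat 1 \<in> G"
  and mult_in_G: "a \<in> G \<Longrightarrow> b \<in> G \<Longrightarrow> a ** b \<in> G"
  and inverse_in_G: "a \<in> G \<Longrightarrow> matrix_inv a \<in> G \<and> matrix_inv a ** a = mat 1"
  and unitary_G: "a \<in> G \<Longrightarrow> unitary_mat a"
  using unitary_group unfolding finite_unitary_group_def by auto

lemma finite_X: "finite X"
  using finite_G generators_subset finite_subset by blast

lemma norm_mult_G: "a \<in> G \<Longrightarrow> norm (a *v v) = norm v"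
  by (simp add: unitary_G unitary_mat_norm)

lemma dist_mult_G: "a \<in> G \<Longrightarrow> norm (a *v v - a *v w) = norm (v - w)"
  by (simp add: unitary_G unitary_mat_dist)

lemma run_product_in_G: "set cs \<subseteq> G \<Longrightarrow> run_product cs \<in> G"
  by (induction cs) (simp_all add: one_in_G mult_in_G run_product_Cons)

lemma apply_run_dist: "set cs \<subseteq> G \<Longrightarrow> norm (apply_run cs v - apply_run cs w) = norm (v - w)"
  by (induction cs arbitrary: v w) (simp_all add: dist_mult_G)

lemma MG_nonempty: "\<exists>c. c \<in> MG X x0 w"
proof -
  let ?f = "\<lambda>c. norm (c *v w - x0)"
  have "finite (X \<union> {mat 1})" "X \<union> {mat 1} \<noteq> {}"
    using finite_X by auto
  from arg_min_if_finite[OF this, of ?f] show ?thesis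
    unfolding MG_def by (auto simp: not_less)
qed

definition gains :: "real set" where
  "gains = {norm (w - x0) - norm (c *v w - x0) | w c. w \<in> orbit G x0 - {x0} \<and> c \<in> MG X x0 w}"

lemma delta_eq_Min_gains: "\<delta> = Min gains"
  unfolding delta_def gains_def ..

lemma finite_gains: "finite gains"
proof -
  have "gains \<subseteq> (\<lambda>(w, c). norm (w - x0) - norm (c *v w - x0)) ` (orbit G x0 \<times> (X \<union> {mat 1}))"
    unfolding gains_def MG_def by auto
  moreover have "finite (orbit G x0)"
    using finite_G unfolding orbit_def by simp
  ultimately show ?thesis
    using finite_X by (meson finite_SigmaI finite_Un finite_imageI finite_insert finite_subset
        finite.emptyI)
qed

lemma gains_nonempty: "gains \<noteq> {}"
proof -
  have "x0 \<in> orbit G x0"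
    using one_in_G unfolding orbit_def by force
  then obtain w where "w \<in> orbit G x0" "w \<noteq> x0"
    using orbit_nontrivial by auto
  moreover obtain c where "c \<in> MG X x0 w"
    using MG_nonempty by blast
  ultimately show ?thesis
    unfolding gains_def by blast
qed

lemma delta_le_gain:
  "w \<in> orbit G x0 \<Longrightarrow> w \<noteq> x0 \<Longrightarrow> c \<in> MG X x0 w \<Longrightarrow> \<delta> \<le> norm (w - x0) - norm (c *v w - x0)"
  unfolding delta_eq_Min_gains by (rule Min_le[OF finite_gains]) (auto simp: gains_def)

lemma delta_pos: "\<delta> > 0"
proof -
  have "Min gains \<in> gains"
    using finite_gains gains_nonempty by simp
  then obtain w c where wc: "\<delta> = norm (w - x0) - norm (c *v w - x0)"
      "w \<in> orbit G x0" "w \<noteq> x0" "c \<in> MG X x0 w"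
    unfolding gains_def delta_eq_Min_gains by blast
  obtain c' where "c' \<in> X" "norm (c' *v w - x0) < norm (w - x0)"
    using ddagger wc(2,3) unfolding cond_ddagger_def by blast
  with wc show ?thesis
    unfolding MG_def by force
qed

lemma delta_le_dist: "w \<in> orbit G x0 \<Longrightarrow> w \<noteq> x0 \<Longrightarrow> \<delta> \<le> norm (w - x0)"
  using MG_nonempty delta_le_gain by (smt (verit) norm_ge_zero)

text \<open>Since \<open>\<delta> > 0\<close>, a best move for a non-fixed orbit point is never the identity.\<close>
lemma improvable_near_moved_orbit_point:
  assumes "h \<in> G" "norm (r - h *v x0) < \<delta> / 3" "h *v x0 \<noteq> x0"
  shows "can_continue X x0 \<delta> r"
proof -
  define w where "w = h *v x0"
  have w: "w \<in> orbit G x0" "w \<noteq> x0"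
    using assms(1,3) unfolding w_def orbit_def by auto
  obtain c where c: "c \<in> MG X x0 w"
    using MG_nonempty by blast
  have gain: "\<delta> \<le> norm (w - x0) - norm (c *v w - x0)"
    using delta_le_gain[OF w c] .
  have "c \<in> X"
    using c gain delta_pos unfolding MG_def by auto
  then have "norm (c *v r - c *v w) = norm (r - w)"
    using generators_subset dist_mult_G by blast
  moreover have "norm (c *v r - x0) \<le> norm (c *v r - c *v w) + norm (c *v w - x0)"
    by (rule norm_diff_triangle_le) auto
  moreover have "norm (w - x0) \<le> norm (r - w) + norm (r - x0)"
    using norm_diff_triangle_le[of w r "norm (r - w)" x0] by (simp add: norm_minus_commute)
  ultimately have "improves c x0 \<delta> r"
    unfolding improves_def using gain assms(2)[folded w_def] by linarith
  with \<open>c \<in> X\<close> show ?thesis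
    unfolding can_continue_def by blast
qed

lemma improvable_near_orbit_imp_far:
  assumes "h \<in> G" "norm (r - h *v x0) < \<delta> / 3" "improves c x0 \<delta> r"
  shows "2 * \<delta> / 3 < norm (r - x0)"
proof -
  define w where "w = h *v x0"
  have "\<delta> / 3 < norm (r - x0)"
    using assms(3) norm_ge_zero[of "c *v r - x0"] unfolding improves_def by linarith
  then have "w \<noteq> x0"
    using assms(2) w_def by auto
  moreover have "w \<in> orbit G x0"
    using assms(1) unfolding w_def orbit_def by auto
  ultimately have "\<delta> \<le> norm (w - x0)"
    by (rule delta_le_dist[rotated])
  moreover have "norm (w - x0) \<le> norm (r - w) + norm (r - x0)"
    using norm_diff_triangle_le[of w r "norm (r - w)" x0] by (simp add: norm_minus_commute)
  ultimately show ?thesis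
    using assms(2)[folded w_def] by linarith
qed

lemma improving_run_tracks_orbit:
  assumes "improving_run X x0 d r cs" "h \<in> G"
  shows "run_product cs ** h \<in> G"
    and "norm (apply_run cs r - (run_product cs ** h) *v x0) = norm (r - h *v x0)"
proof -
  have "set cs \<subseteq> G"
    using improving_run_set[OF assms(1)] generators_subset by blast
  then show "run_product cs ** h \<in> G"
    and "norm (apply_run cs r - (run_product cs ** h) *v x0) = norm (r - h *v x0)"
    using apply_run_dist[of cs r "h *v x0"] assms(2)
    by (simp_all add: mult_in_G run_product_in_G apply_run_eq_run_product matrix_vector_mul_assoc)
qed

lemma improving_run_length:
  assumes "improving_run X x0 \<delta> r cs" "h \<in> G" "norm (r - h *v x0) < \<delta> / 3"
  shows "real (length cs) * \<delta> < 6"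
proof (cases cs rule: rev_cases)
  case Nil
  then show ?thesis by simp
next
  case (snoc cs' c)
  let ?r' = "apply_run cs' r"
  have run': "improving_run X x0 \<delta> r cs'" and step: "improves c x0 \<delta> ?r'"
    using assms(1) snoc by (simp_all add: improving_run_snoc)
  have "2 * \<delta> / 3 < norm (?r' - x0)"
    using improvable_near_orbit_imp_far[OF improving_run_tracks_orbit(1)[OF run' assms(2)] _ step]
      improving_run_tracks_orbit(2)[OF run' assms(2)] assms(3) by simp
  moreover have "norm (?r' - x0) + real (length cs') * \<delta> / 3 \<le> norm (r - x0)"
    using improving_run_dist[OF run'] .
  moreover have "norm (h *v x0 - x0) \<le> 2"
    using norm_triangle_ineq4[of "h *v x0" x0] norm_mult_G[OF assms(2)] norm_x0 by simp
  then have "norm (r - x0) < 2 + \<delta> / 3"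
    using norm_diff_triangle_le[of r "h *v x0" _ x0] assms(3) by fastforce
  ultimately show ?thesis
    using snoc by (simp add: algebra_simps)
qed

lemma terminated_improving_run_fixes:
  assumes "improving_run X x0 \<delta> r cs" "h \<in> G" "norm (r - h *v x0) < \<delta> / 3"
    and "\<not> can_continue X x0 \<delta> (apply_run cs r)"
  shows "run_product cs ** h \<in> stab G x0"
  using improvable_near_moved_orbit_point[of "run_product cs ** h" "apply_run cs r"]
    improving_run_tracks_orbit[OF assms(1,2)] assms(3,4)
  unfolding stab_def by auto

lemma improving_run_decodes:
  assumes "g \<in> G" "norm (r - matrix_inv g *v x0) < \<delta> / 3" "improving_run X x0 \<delta> r cs"
  shows "int (length cs) \<le> \<lfloor>6 / \<delta>\<rfloor>"
    and "\<not> can_continue X x0 \<delta> (apply_run cs r) \<Longrightarrow> run_product cs \<in> (\<lambda>s. s ** g) ` stab G x0"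
proof -
  have h: "matrix_inv g \<in> G" "matrix_inv g ** g = mat 1"
    using inverse_in_G[OF assms(1)] by auto
  have "real (length cs) * \<delta> < 6"
    using improving_run_length[OF assms(3) h(1) assms(2)] .
  then show "int (length cs) \<le> \<lfloor>6 / \<delta>\<rfloor>"
    using delta_pos by (simp add: le_floor_iff pos_le_divide_eq less_imp_le)
  assume "\<not> can_continue X x0 \<delta> (apply_run cs r)"
  then have "run_product cs ** matrix_inv g \<in> stab G x0"
    using terminated_improving_run_fixes[OF assms(3) h(1) assms(2)] by blast
  moreover have "(run_product cs ** matrix_inv g) ** g = run_product cs"
    by (simp add: h(2) flip: matrix_mul_assoc)
  ultimately show "run_product cs \<in> (\<lambda>s. s ** g) ` stab G x0"
    by (metis image_eqI)
qed

end

theorem mainTheorem10: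
  fixes G X :: "'n::finite cmat set" and x0 r :: "complex^'n" and g :: "'n cmat"
  assumes "finite_unitary_group G"
    and "norm x0 = 1"
    and "orbit G x0 \<noteq> {x0}"
    and "X \<subseteq> G" and "generated X = G"
    and "cond_ddagger G X x0"
    and "g \<in> G"
    and "norm (r - matrix_inv g *v x0) < delta G X x0 / 3"
  shows
    "(\<forall>cs. run_A X x0 (delta G X x0) r cs \<longrightarrow> int (length cs) \<le> \<lfloor>6 / delta G X x0\<rfloor>)
   \<and> (\<exists>cs. run_A X x0 (delta G X x0) r cs
           \<and> \<not> can_continue X x0 (delta G X x0) (apply_run cs r))
   \<and> (\<forall>cs. run_A X x0 (delta G X x0) r cs
           \<and> \<not> can_continue X x0 (delta G X x0) (apply_run cs r)
           \<longrightarrow> run_product cs \<in> (\<lambda>s. s ** g) ` stab G x0)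
   \<and> (\<forall>xs. distinct xs \<and> set xs = X \<longrightarrow>
        (\<forall>cs. run_B xs x0 (delta G X x0) r cs \<longrightarrow> int (length cs) \<le> \<lfloor>6 / delta G X x0\<rfloor>)
      \<and> (\<exists>cs. run_B xs x0 (delta G X x0) r cs
           \<and> \<not> can_continue X x0 (delta G X x0) (apply_run cs r))
      \<and> (\<forall>cs. run_B xs x0 (delta G X x0) r cs
           \<and> \<not> can_continue X x0 (delta G X x0) (apply_run cs r)
           \<longrightarrow> run_product cs \<in> (\<lambda>s. s ** g) ` stab G x0))"
proof -
  interpret unitary_decoding G X x0
    using assms(1-4,6) by unfold_locales
  note decodes = improving_run_decodes[OF assms(7,8)]
  have length_bound: "length cs \<le> nat \<lfloor>6 / \<delta>\<rfloor>" if "improving_run X x0 \<delta> r cs" for cs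
    using decodes(1)[OF that] by linarith
  have "\<exists>cs. run_A X x0 \<delta> r cs \<and> \<not> can_continue X x0 \<delta> (apply_run cs r)"
    by (rule ex_unextendable_list[where N = "nat \<lfloor>6 / \<delta>\<rfloor>"])
      (auto intro: length_bound run_A_improving run_A_extend finite_X)
  moreover have "\<exists>cs. run_B xs x0 \<delta> r cs \<and> \<not> can_continue X x0 \<delta> (apply_run cs r)"
    if xs: "set xs = X" for xs
    by (rule ex_unextendable_list[where N = "nat \<lfloor>6 / \<delta>\<rfloor>"])
      (auto intro: length_bound run_B_improving[OF xs] run_B_extend[of xs, unfolded xs])
  ultimately show ?thesis
    using decodes run_A_improving run_B_improving by blast
qed

end
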